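(* If two quadrilaterals in $K^2$ in standard form share the same coefficient and the same centroid, then both quadrilaterals have the same bisectors (with the same midpoints).
   Context: $K$ is a field of characteristic $\neq 2$; we work in $K^2$ inside the projective plane. A quadrilateral $Q=ABA'B'$ consists of four distinct lines $A,B,A',B'$ (sides), not all through one point, with adjacent sides ($A,B$; $B,A'$; $A',B'$; $B',A$) not parallel; opposite sides may be parallel. Vertices: $A\cap B$, $B\cap A'$, $A'\cap B'$, $B'\cap A$. The centroid is the average of the four vertices. $Q$ is in standard form if $A$ is the line $Y=0$ and $A'$ is the line $X=0$; its coefficient is the product of the slopes of $B$ and $B'$. A line $\ell$ crosses a pair $\{\ell_1,\ell_2\}$ if it is distinct from both and not parallel to both; $\mathrm{mid}_{\{\ell_1,\ell_2\}}(\ell)$ is the midpoint of the points where $\ell$ meets $\ell_1,\ell_2$ (the point at infinity of $\ell$ if one of them is at infinity). $\ell$ bisects $Q$ (is a bisector) if $\mathrm{mid}_{\mathsf P}(\ell)$ is the same for all pairs $\mathsf P$ among $\{A,A'\},\{B,B'\}$ that $\ell$ crosses; this common point is the midpoint of the bisector. A bisector is regarded as the line together with its midpoint. *)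

theory Defs
  imports Main
begin

text \<open>Affine lines in K^2 are represented as point sets; points of the projective plane
  are either affine points or points at infinity, the latter represented by the direction
  (one-dimensional subspace of difference vectors) of the lines through them.\<close>

datatype 'a ppoint = Aff "'a \<times> 'a" | AtInf "('a \<times> 'a) set"

definition is_line :: "('a::field \<times> 'a) set \<Rightarrow> bool" where
  "is_line L \<longleftrightarrow> (\<exists>a b c. (a \<noteq> 0 \<or> b \<noteq> 0) \<and> L = {(x, y). a * x + b * y = c})"

definition direction :: "('a::field \<times> 'a) set \<Rightarrow> ('a \<times> 'a) set" where
  "direction L = {(fst p - fst q, snd p - snd q) | p q. p \<in> L \<and> q \<in> L}"

definition parallel :: "('a::field \<times> 'a) set \<Rightarrow> ('a \<times> 'a) set \<Rightarrow> bool" where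
  "parallel L M \<longleftrightarrow> direction L = direction M"

definition meet :: "('a::field \<times> 'a) set \<Rightarrow> ('a \<times> 'a) set \<Rightarrow> 'a ppoint" where
  "meet L M = (if parallel L M then AtInf (direction L) else Aff (THE p. p \<in> L \<and> p \<in> M))"

definition midpt :: "'a::field \<times> 'a \<Rightarrow> 'a \<times> 'a \<Rightarrow> 'a \<times> 'a" where
  "midpt p q = ((fst p + fst q) / 2, (snd p + snd q) / 2)"

definition crosses :: "('a::field \<times> 'a) set \<Rightarrow> ('a \<times> 'a) set \<Rightarrow> ('a \<times> 'a) set \<Rightarrow> bool" where
  "crosses l L1 L2 \<longleftrightarrow> l \<noteq> L1 \<and> l \<noteq> L2 \<and> \<not> (parallel l L1 \<and> parallel l L2)"

definition mid :: "('a::field \<times> 'a) set \<Rightarrow> ('a \<times> 'a) set \<Rightarrow> ('a \<times> 'a) set \<Rightarrow> 'a ppoint" where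
  "mid l L1 L2 = (if parallel l L1 \<or> parallel l L2 then AtInf (direction l)
     else Aff (midpt (THE p. p \<in> l \<and> p \<in> L1) (THE p. p \<in> l \<and> p \<in> L2)))"

definition quadrilateral :: "('a::field \<times> 'a) set \<Rightarrow> ('a \<times> 'a) set \<Rightarrow> ('a \<times> 'a) set \<Rightarrow> ('a \<times> 'a) set \<Rightarrow> bool" where
  "quadrilateral A B A' B' \<longleftrightarrow>
     is_line A \<and> is_line B \<and> is_line A' \<and> is_line B' \<and>
     A \<noteq> B \<and> A \<noteq> A' \<and> A \<noteq> B' \<and> B \<noteq> A' \<and> B \<noteq> B' \<and> A' \<noteq> B' \<and>
     \<not> (\<exists>p. p \<in> A \<and> p \<in> B \<and> p \<in> A' \<and> p \<in> B') \<and>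
     \<not> parallel A B \<and> \<not> parallel B A' \<and> \<not> parallel A' B' \<and> \<not> parallel B' A"

definition vertex :: "('a::field \<times> 'a) set \<Rightarrow> ('a \<times> 'a) set \<Rightarrow> 'a \<times> 'a" where
  "vertex L M = (THE p. p \<in> L \<and> p \<in> M)"

definition centroid :: "('a::field \<times> 'a) set \<Rightarrow> ('a \<times> 'a) set \<Rightarrow> ('a \<times> 'a) set \<Rightarrow> ('a \<times> 'a) set \<Rightarrow> 'a \<times> 'a" where
  "centroid A B A' B' =
     (let v1 = vertex A B; v2 = vertex B A'; v3 = vertex A' B'; v4 = vertex B' A in
      ((fst v1 + fst v2 + fst v3 + fst v4) / 4, (snd v1 + snd v2 + snd v3 + snd v4) / 4))"

definition standard_form :: "('a::field \<times> 'a) set \<Rightarrow> ('a \<times> 'a) set \<Rightarrow> ('a \<times> 'a) set \<Rightarrow> ('a \<times> 'a) set \<Rightarrow> bool" where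
  "standard_form A B A' B' \<longleftrightarrow> A = {(x, y). y = 0} \<and> A' = {(x, y). x = 0}"

definition slope :: "('a::field \<times> 'a) set \<Rightarrow> 'a" where
  "slope L = (THE m. \<exists>c. L = {(x, y). y = m * x + c})"

definition coefficient :: "('a::field \<times> 'a) set \<Rightarrow> ('a \<times> 'a) set \<Rightarrow> ('a \<times> 'a) set \<Rightarrow> ('a \<times> 'a) set \<Rightarrow> 'a" where
  "coefficient A B A' B' = slope B * slope B'"

definition bisectors :: "('a::field \<times> 'a) set \<Rightarrow> ('a \<times> 'a) set \<Rightarrow> ('a \<times> 'a) set \<Rightarrow> ('a \<times> 'a) set
    \<Rightarrow> (('a \<times> 'a) set \<times> 'a ppoint) set" where
  "bisectors A B A' B' = {(l, m). is_line l \<and> (crosses l A A' \<or> crosses l B B') \<and>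
     (crosses l A A' \<longrightarrow> mid l A A' = m) \<and> (crosses l B B' \<longrightarrow> mid l B B' = m)}"

end

theory Submission
  imports Defs
begin

text \<open>In standard form A is y = 0, A' is x = 0, and B, B' are lines y = m x + c, y = m' x + c'
  with m, m' nonzero. The vertices are (-c/m, 0), (0, c), (0, c'), (-c'/m', 0), so four times the
  centroid is (X, Y) = (-c/m - c'/m', c + c') and the coefficient is k = m m'. A line y = s x + t
  with s \<noteq> 0 crosses {A, A'} with midpoint (-t/2s, t/2), and it bisects iff the abscissas of
  its intersections with B and B' add up to -t/s; clearing denominators this reads
  (Y - t) s^2 + X k s + t k = 0, which also covers the lines parallel to B or B'.
  Among horizontal and vertical lines only A and A' bisect, with midpoints (X/2, 0) and (0, Y/2).
  So the bisectors depend only on X, Y and k.\<close>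

definition sloped_line :: "'a::field \<Rightarrow> 'a \<Rightarrow> ('a \<times> 'a) set" where
  "sloped_line s t = {(x, y). y = s * x + t}"

definition vertical_line :: "'a::field \<Rightarrow> ('a \<times> 'a) set" where
  "vertical_line u = {(x, y). x = u}"

lemma direction_sloped_line: "direction (sloped_line s t) = range (\<lambda>d. (d, s * d))"
proof (intro set_eqI iffI)
  fix v :: "'a \<times> 'a"
  assume "v \<in> range (\<lambda>d. (d, s * d))"
  then obtain d where "v = (d, s * d)" by blast
  moreover have "(d, s * d + t) \<in> sloped_line s t" "(0, t) \<in> sloped_line s t"
    by (simp_all add: sloped_line_def)
  ultimately show "v \<in> direction (sloped_line s t)"
    unfolding direction_def by force
qed (auto simp: direction_def sloped_line_def algebra_simps)

lemma direction_vertical_line: "direction (vertical_line u) = range (\<lambda>d. (0, d))"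
proof (intro set_eqI iffI)
  fix v :: "'a \<times> 'a"
  assume "v \<in> range (\<lambda>d. (0, d))"
  then obtain d where "v = (0, d)" by blast
  moreover have "(u, d) \<in> vertical_line u" "(u, 0) \<in> vertical_line u"
    by (simp_all add: vertical_line_def)
  ultimately show "v \<in> direction (vertical_line u)"
    unfolding direction_def by force
qed (auto simp: direction_def vertical_line_def)

lemma parallel_sloped_lines_iff [simp]: "parallel (sloped_line s t) (sloped_line s' t') \<longleftrightarrow> s = s'"
proof
  assume "parallel (sloped_line s t) (sloped_line s' t')"
  then have "(1, s) \<in> range (\<lambda>d. (d, s' * d))"
    unfolding parallel_def direction_sloped_line by (metis rangeI mult_1_right)
  then show "s = s'" by auto
qed (simp add: parallel_def direction_sloped_line)

lemma not_parallel_sloped_vertical [simp]: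
  "\<not> parallel (sloped_line s t) (vertical_line u)" "\<not> parallel (vertical_line u) (sloped_line s t)"
proof -
  have "(0, 1) \<notin> direction (sloped_line s t)" "(0, 1) \<in> direction (vertical_line u)"
    by (auto simp: direction_sloped_line direction_vertical_line)
  then show "\<not> parallel (sloped_line s t) (vertical_line u)" "\<not> parallel (vertical_line u) (sloped_line s t)"
    unfolding parallel_def by metis+
qed

lemma parallel_vertical_lines [simp]: "parallel (vertical_line u) (vertical_line u')"
  by (simp add: parallel_def direction_vertical_line)

lemma sloped_line_eq_iff [simp]: "sloped_line s t = sloped_line s' t' \<longleftrightarrow> s = s' \<and> t = t'"
proof
  assume eq: "sloped_line s t = sloped_line s' t'"
  have "(0, t) \<in> sloped_line s' t'" "(1, s + t) \<in> sloped_line s' t'"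
    unfolding eq[symmetric] by (simp_all add: sloped_line_def)
  then show "s = s' \<and> t = t'" by (simp add: sloped_line_def)
qed simp

lemma vertical_line_eq_iff [simp]: "vertical_line u = vertical_line u' \<longleftrightarrow> u = u'"
  by (auto simp: vertical_line_def set_eq_iff)

lemma sloped_line_neq_vertical_line [simp]:
  "sloped_line s t \<noteq> vertical_line u" "vertical_line u \<noteq> sloped_line s t"
proof -
  have "(u, s * u + t + 1) \<in> vertical_line u" "(u, s * u + t + 1) \<notin> sloped_line s t"
    by (simp_all add: vertical_line_def sloped_line_def)
  then show "sloped_line s t \<noteq> vertical_line u" "vertical_line u \<noteq> sloped_line s t"
    by metis+
qed

lemma is_line_sloped_line [simp]: "is_line (sloped_line s t)"
  unfolding is_line_def sloped_line_def
  by (rule exI[of _ "- s"], rule exI[of _ 1], rule exI[of _ t]) (auto simp: algebra_simps)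

lemma is_line_vertical_line [simp]: "is_line (vertical_line u)"
  unfolding is_line_def vertical_line_def by (rule exI[of _ 1], rule exI[of _ 0], rule exI[of _ u]) auto

lemma is_line_cases:
  assumes "is_line L"
  obtains u where "L = vertical_line u"
    | t where "L = sloped_line 0 t"
    | s t where "s \<noteq> 0" "L = sloped_line s t"
proof -
  obtain a b c where ab: "a \<noteq> 0 \<or> b \<noteq> 0" and L: "L = {(x, y). a * x + b * y = c}"
    using assms unfolding is_line_def by blast
  show thesis
  proof (cases "b = 0")
    case True
    with ab have "L = vertical_line (c / a)"
      unfolding L vertical_line_def by (auto simp: field_simps)
    then show thesis by fact
  next
    case b: False
    then have L': "L = sloped_line (- a / b) (c / b)"
      unfolding L sloped_line_def by (auto simp: field_simps)
    show thesis
    proof (cases "a = 0")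
      case True
      with L' show thesis by (intro that(2)) simp
    next
      case False
      with b L' show thesis by (intro that(3)) simp_all
    qed
  qed
qed

lemma slope_sloped_line [simp]: "slope (sloped_line s t) = s"
  unfolding slope_def
proof (rule the_equality)
  fix m assume "\<exists>c. sloped_line s t = {(x, y). y = m * x + c}"
  then show "m = s" by (metis sloped_line_def sloped_line_eq_iff)
qed (auto simp: sloped_line_def)

lemma vertex_sloped_lines:
  assumes "s \<noteq> s'"
  shows "vertex (sloped_line s t) (sloped_line s' t') = ((t' - t) / (s - s'), s * ((t' - t) / (s - s')) + t)"
  unfolding vertex_def
proof (rule the_equality)
  fix p assume "p \<in> sloped_line s t \<and> p \<in> sloped_line s' t'"
  then obtain x where p: "p = (x, s * x + t)" and "s * x + t = s' * x + t'"
    by (auto simp: sloped_line_def)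
  then have "x = (t' - t) / (s - s')"
    using assms by (simp add: field_simps)
  with p show "p = ((t' - t) / (s - s'), s * ((t' - t) / (s - s')) + t)"
    by (simp add: field_simps)
qed (use assms in \<open>simp add: sloped_line_def field_simps\<close>)

lemma vertex_sloped_vertical [simp]: "vertex (sloped_line s t) (vertical_line u) = (u, s * u + t)"
  unfolding vertex_def by (rule the_equality) (auto simp: sloped_line_def vertical_line_def)

lemma vertex_vertical_sloped [simp]: "vertex (vertical_line u) (sloped_line s t) = (u, s * u + t)"
  unfolding vertex_def by (rule the_equality) (auto simp: sloped_line_def vertical_line_def)

lemma mid_eq_midpt_vertex:
  "mid l L1 L2 = (if parallel l L1 \<or> parallel l L2 then AtInf (direction l)
     else Aff (midpt (vertex l L1) (vertex l L2)))"
  by (simp add: mid_def vertex_def)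

lemma parallel_commute: "parallel L M \<longleftrightarrow> parallel M L"
  by (auto simp: parallel_def)

lemma crosses_commute: "crosses l L1 L2 \<longleftrightarrow> crosses l L2 L1"
  by (auto simp: crosses_def)

lemma mid_commute: "mid l L1 L2 = mid l L2 L1"
  by (simp add: mid_def midpt_def add.commute disj_commute)

lemma midpt_on_sloped_line_eq_iff:
  fixes s t x1 x2 :: "'a::field"
  assumes "(2::'a) \<noteq> 0" "s \<noteq> 0"
  shows "midpt (x1, s * x1 + t) (x2, s * x2 + t) = (- (t / s) / 2, t / 2) \<longleftrightarrow> x1 + x2 = - (t / s)"
proof -
  have "midpt (x1, s * x1 + t) (x2, s * x2 + t) = ((x1 + x2) / 2, (s * (x1 + x2) + 2 * t) / 2)"
    by (simp add: midpt_def algebra_simps)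
  moreover have "s * (x1 + x2) + 2 * t = t" if "x1 + x2 = - (t / s)"
    using that assms(2) by simp
  ultimately show ?thesis
    using assms(1) by (auto simp: divide_cancel_right)
qed

lemma meet_abscissas_sum_eq_iff:
  fixes s t m c m' c' :: "'a::field"
  assumes "s \<noteq> 0" "s \<noteq> m" "s \<noteq> m'"
  shows "(c - t) / (s - m) + (c' - t) / (s - m') = - (t / s) \<longleftrightarrow>
    (c + c' - t) * s\<^sup>2 - (c * m' + c' * m) * s + t * (m * m') = 0"
proof -
  from assms have "s - m \<noteq> 0" "s - m' \<noteq> 0" by simp_all
  with assms(1) have "(c - t) / (s - m) + (c' - t) / (s - m') + t / s =
    ((c + c' - t) * s\<^sup>2 - (c * m' + c' * m) * s + t * (m * m')) / (s * (s - m) * (s - m'))"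
    by (simp add: divide_simps) (simp add: algebra_simps power2_eq_square)
  with assms show ?thesis
    by (simp add: eq_neg_iff_add_eq_0)
qed

text \<open>A line parallel to B meets it at infinity, so it satisfies the condition only by not crossing
  {B, B'}.\<close>

lemma bisects_pair_parallel_iff:
  fixes m t c m' c' :: "'a::field"
  assumes "m \<noteq> 0"
  shows "(crosses (sloped_line m t) (sloped_line m c) (sloped_line m' c') \<longrightarrow>
      mid (sloped_line m t) (sloped_line m c) (sloped_line m' c') = Aff p) \<longleftrightarrow>
    (c + c' - t) * m\<^sup>2 - (c * m' + c' * m) * m + t * (m * m') = 0"
proof -
  have "(c + c' - t) * m\<^sup>2 - (c * m' + c' * m) * m + t * (m * m') = m * (m - m') * (c - t)"
    by (simp add: algebra_simps power2_eq_square)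
  moreover have "crosses (sloped_line m t) (sloped_line m c) (sloped_line m' c') \<longleftrightarrow> m \<noteq> m' \<and> t \<noteq> c"
    by (auto simp: crosses_def)
  ultimately show ?thesis
    using assms by (auto simp: mid_def)
qed

lemma bisects_pair_iff:
  fixes s t m c m' c' :: "'a::field"
  assumes "(2::'a) \<noteq> 0" "s \<noteq> 0" "m \<noteq> 0" "m' \<noteq> 0"
  shows "(crosses (sloped_line s t) (sloped_line m c) (sloped_line m' c') \<longrightarrow>
      mid (sloped_line s t) (sloped_line m c) (sloped_line m' c') = Aff (- (t / s) / 2, t / 2)) \<longleftrightarrow>
    (c + c' - t) * s\<^sup>2 - (c * m' + c' * m) * s + t * (m * m') = 0"
proof -
  consider "s = m" | "s = m'" | "s \<noteq> m" "s \<noteq> m'" by blast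
  then show ?thesis
  proof cases
    case 1
    then show ?thesis using bisects_pair_parallel_iff assms(3) by blast
  next
    case 2
    have "(c + c' - t) * s\<^sup>2 - (c * m' + c' * m) * s + t * (m * m') =
      (c' + c - t) * s\<^sup>2 - (c' * m + c * m') * s + t * (m' * m)"
      by (simp add: algebra_simps)
    with 2 show ?thesis
      using bisects_pair_parallel_iff[of m' t c' m c] assms(4) crosses_commute mid_commute by metis
  next
    case 3
    define x1 x2 where "x1 = (c - t) / (s - m)" and "x2 = (c' - t) / (s - m')"
    have "crosses (sloped_line s t) (sloped_line m c) (sloped_line m' c')"
      using 3 by (simp add: crosses_def)
    moreover have "mid (sloped_line s t) (sloped_line m c) (sloped_line m' c') =
      Aff (midpt (x1, s * x1 + t) (x2, s * x2 + t))"
      using 3 by (simp add: mid_eq_midpt_vertex vertex_sloped_lines x1_def x2_def)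
    ultimately show ?thesis
      using midpt_on_sloped_line_eq_iff[OF assms(1,2)]
        meet_abscissas_sum_eq_iff[OF assms(2) 3, of c t c', folded x1_def x2_def]
      by simp
  qed
qed

lemma vertical_line_in_bisectors_iff:
  fixes m c m' c' :: "'a::field"
  assumes "m \<noteq> 0" "m' \<noteq> 0"
  shows "(vertical_line u, p) \<in> bisectors (sloped_line 0 0) (sloped_line m c) (vertical_line 0) (sloped_line m' c')
    \<longleftrightarrow> u = 0 \<and> p = Aff (0, (c + c') / 2)"
  using assms by (cases "u = 0") (auto simp: bisectors_def crosses_def mid_eq_midpt_vertex midpt_def)

lemma horizontal_line_in_bisectors_iff:
  fixes m c m' c' :: "'a::field"
  assumes "m \<noteq> 0" "m' \<noteq> 0"
  shows "(sloped_line 0 t, p) \<in> bisectors (sloped_line 0 0) (sloped_line m c) (vertical_line 0) (sloped_line m' c')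
    \<longleftrightarrow> t = 0 \<and> p = Aff ((- (c / m) - c' / m') / 2, 0)"
  using assms
  by (cases "t = 0") (auto simp: bisectors_def crosses_def mid_eq_midpt_vertex midpt_def vertex_sloped_lines)

lemma sloped_line_in_bisectors_iff:
  fixes s t m c m' c' :: "'a::field"
  assumes "(2::'a) \<noteq> 0" "s \<noteq> 0" "m \<noteq> 0" "m' \<noteq> 0"
  shows "(sloped_line s t, p) \<in> bisectors (sloped_line 0 0) (sloped_line m c) (vertical_line 0) (sloped_line m' c')
    \<longleftrightarrow> p = Aff (- (t / s) / 2, t / 2) \<and> (c + c' - t) * s\<^sup>2 - (c * m' + c' * m) * s + t * (m * m') = 0"
proof -
  have "crosses (sloped_line s t) (sloped_line 0 0) (vertical_line 0)"
    using assms(2) by (simp add: crosses_def)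
  moreover have "mid (sloped_line s t) (sloped_line 0 0) (vertical_line 0) = Aff (- (t / s) / 2, t / 2)"
    using assms(2) by (simp add: mid_eq_midpt_vertex vertex_sloped_lines midpt_def)
  ultimately show ?thesis
    using bisects_pair_iff[OF assms] by (auto simp: bisectors_def)
qed

text \<open>X and Y are the coordinate sums of the four vertices, i.e. four times the centroid, and k is
  the coefficient.\<close>

definition standard_bisectors :: "'a::field \<Rightarrow> 'a \<Rightarrow> 'a \<Rightarrow> (('a \<times> 'a) set \<times> 'a ppoint) set" where
  "standard_bisectors X Y k =
     {(sloped_line 0 0, Aff (X / 2, 0)), (vertical_line 0, Aff (0, Y / 2))} \<union>
     {(sloped_line s t, Aff (- (t / s) / 2, t / 2)) | s t.
        s \<noteq> 0 \<and> (Y - t) * s\<^sup>2 + X * k * s + t * k = 0}"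

lemma bisectors_standard_coordinates:
  fixes m c m' c' :: "'a::field"
  assumes two: "(2::'a) \<noteq> 0" and m: "m \<noteq> 0" and m': "m' \<noteq> 0"
  shows "bisectors (sloped_line 0 0) (sloped_line m c) (vertical_line 0) (sloped_line m' c') =
    standard_bisectors (- (c / m) - c' / m') (c + c') (m * m')"
proof (rule set_eqI, clarify)
  fix l :: "('a \<times> 'a) set" and p :: "'a ppoint"
  show "(l, p) \<in> bisectors (sloped_line 0 0) (sloped_line m c) (vertical_line 0) (sloped_line m' c') \<longleftrightarrow>
    (l, p) \<in> standard_bisectors (- (c / m) - c' / m') (c + c') (m * m')"
  proof (cases "is_line l")
    case False
    then show ?thesis by (auto simp: bisectors_def standard_bisectors_def)
  next
    case True
    then show ?thesis
    proof (cases rule: is_line_cases)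
      case (1 u)
      then show ?thesis
        using vertical_line_in_bisectors_iff[OF m m'] by (auto simp: standard_bisectors_def)
    next
      case (2 t)
      then show ?thesis
        using horizontal_line_in_bisectors_iff[OF m m'] by (auto simp: standard_bisectors_def)
    next
      case (3 s t)
      have "(- (c / m) - c' / m') * (m * m') = - (c * m' + c' * m)"
        using m m' by (simp add: field_simps)
      then have "(c + c' - t) * s\<^sup>2 + (- (c / m) - c' / m') * (m * m') * s + t * (m * m') =
        (c + c' - t) * s\<^sup>2 - (c * m' + c' * m) * s + t * (m * m')"
        by (simp add: algebra_simps)
      with 3 show ?thesis
        using sloped_line_in_bisectors_iff[OF two \<open>s \<noteq> 0\<close> m m'] by (auto simp: standard_bisectors_def)
    qed
  qed
qed

lemma centroid_standard_coordinates:
  fixes m c m' c' :: "'a::field"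
  assumes "m \<noteq> 0" "m' \<noteq> 0"
  shows "centroid (sloped_line 0 0) (sloped_line m c) (vertical_line 0) (sloped_line m' c') =
    ((- (c / m) - c' / m') / 4, (c + c') / 4)"
  using assms by (simp add: centroid_def vertex_sloped_lines)

lemma standard_form_sides:
  assumes "quadrilateral A B A' B'" and "standard_form A B A' B'"
  obtains m c m' c' where "m \<noteq> 0" "m' \<noteq> 0"
    "A = sloped_line 0 0" "B = sloped_line m c" "A' = vertical_line 0" "B' = sloped_line m' c'"
proof -
  have A: "A = sloped_line 0 0" "A' = vertical_line 0"
    using assms(2) by (auto simp: standard_form_def sloped_line_def vertical_line_def)
  have side: "\<exists>m c. m \<noteq> 0 \<and> L = sloped_line m c"
    if "is_line L" "\<not> parallel L (sloped_line 0 0)" "\<not> parallel L (vertical_line 0)" for L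
    using that(1) by (rule is_line_cases) (use that in simp_all)
  obtain m c where B: "m \<noteq> 0" "B = sloped_line m c"
    using side[of B] assms(1) by (auto simp: quadrilateral_def A parallel_commute[of B])
  obtain m' c' where B': "m' \<noteq> 0" "B' = sloped_line m' c'"
    using side[of B'] assms(1) by (auto simp: quadrilateral_def A parallel_commute[of _ B'])
  show thesis by (rule that[OF B(1) B'(1) A(1) B(2) A(2) B'(2)])
qed

lemma bisectors_eq_standard_bisectors:
  fixes A B A' B' :: "('a::field \<times> 'a) set"
  assumes "(2::'a) \<noteq> 0" and "quadrilateral A B A' B'" and "standard_form A B A' B'"
  shows "bisectors A B A' B' =
    standard_bisectors (4 * fst (centroid A B A' B')) (4 * snd (centroid A B A' B')) (coefficient A B A' B')"
proof -
  obtain m c m' c' where m: "m \<noteq> 0" and m': "m' \<noteq> 0"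
    and sides: "A = sloped_line 0 0" "B = sloped_line m c" "A' = vertical_line 0" "B' = sloped_line m' c'"
    using assms(2,3) by (rule standard_form_sides)
  have "(4::'a) \<noteq> 0"
    using assms(1) mult_eq_0_iff[of "2::'a" 2] by simp
  then have "4 * fst (centroid A B A' B') = - (c / m) - c' / m'" "4 * snd (centroid A B A' B') = c + c'"
    by (simp_all add: sides centroid_standard_coordinates[OF m m'] field_simps)
  with sides show ?thesis
    by (simp add: coefficient_def bisectors_standard_coordinates[OF assms(1) m m'])
qed

theorem corollary4p6:
  fixes A B A' B' C D C' D' :: "('a::field \<times> 'a) set"
  assumes char: "(2::'a) \<noteq> 0"
    and qQ: "quadrilateral A B A' B'" and sQ: "standard_form A B A' B'"
    and qR: "quadrilateral C D C' D'" and sR: "standard_form C D C' D'"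
    and coeff: "coefficient A B A' B' = coefficient C D C' D'"
    and cent: "centroid A B A' B' = centroid C D C' D'"
  shows "bisectors A B A' B' = bisectors C D C' D'"
  using bisectors_eq_standard_bisectors[OF char qQ sQ] bisectors_eq_standard_bisectors[OF char qR sR]
  by (simp add: coeff cent)

end
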